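(* Let $a,b,m\in\mathbb N_0$ with $a+b\ge1$, let $\mathcal R(m,a,b)$ be the number of red balls in an $(a,b)$-Pólya urn after $m$ balls have been added, and let $\mu(m,a,b)=a\big(1+m/(a+b)\big)$. Then for every $t>0$, \[\mathbb P\big(|\mathcal R(m,a,b)-\mu(m,a,b)|\ge t\,\mu(m,a,b)\big)\le 2\exp\Big(-\frac{t^2a^2}{8(a+b)}\Big).\]
   Context: An $(a,b)$-Pólya urn starts with $a$ red and $b$ blue balls; at each step a ball is drawn uniformly at random and returned together with one additional ball of the same colour. *)

theory Defs
  imports "HOL-Probability.Probability"
begin

text \<open>At step m+1 the urn contains a+b+m balls, r of them red; a red
  ball is drawn with probability r/(a+b+m) and then one red ball is added.\<close>
fun polya_red :: "nat \<Rightarrow> nat \<Rightarrow> nat \<Rightarrow> nat pmf" where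
  "polya_red 0 a b = return_pmf a"
| "polya_red (Suc m) a b =
     bind_pmf (polya_red m a b)
       (\<lambda>r. map_pmf (\<lambda>c. if c then r + 1 else r)
              (bernoulli_pmf (real r / real (a + b + m))))"

definition polya_mu :: "nat \<Rightarrow> nat \<Rightarrow> nat \<Rightarrow> real" where
  "polya_mu m a b = real a * (1 + real m / real (a + b))"

end

theory Submission
  imports Defs
begin

text \<open>The proportion of red balls \<open>R\<^sub>m / (a + b + m)\<close> is a martingale whose
  step from time \<open>m\<close> to \<open>m + 1\<close> ranges over an interval of length \<open>1 / (a + b + m + 1)\<close>.
  Hoeffding's lemma for a Bernoulli variable therefore bounds its centred moment generating
  function by \<open>exp (\<lambda>\<^sup>2/8 \<cdot> \<Sum>\<^sub>k 1/(a + b + k + 1)\<^sup>2)\<close>, and the sum telescopes to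
  at most \<open>1/(a + b)\<close>. Chernoff bounds on both sides with \<open>\<lambda> = 4s(a + b)\<close> give
  \<open>P(|R\<^sub>m / (a + b + m) - a / (a + b)| \<ge> s) \<le> 2 exp (-2 s\<^sup>2 (a + b))\<close>, and the event of the
  theorem is this one for \<open>s = t a / (a + b)\<close>.\<close>

lemma polya_red_support: "set_pmf (polya_red m a b) \<subseteq> {..a + m}"
  by (induction m) (fastforce simp: set_bind_pmf)+

lemma bernoulli_centered_mgf_le:
  fixes p h :: real
  assumes "0 \<le> p" "p \<le> 1"
  shows "p * exp ((1 - p) * h) + (1 - p) * exp (- p * h) \<le> exp (h\<^sup>2 / 8)"
proof -
  have nonneg: "p * exp ((1 - p) * h) + (1 - p) * exp (- p * h) \<le> exp (h\<^sup>2 / 8)"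
    if "0 \<le> p" "p \<le> 1" "h \<ge> 0" for p h :: real
  proof -
    have pos: "1 + p * (exp h - 1) > 0"
      using that by (simp add: add_pos_nonneg)
    have "p * exp ((1 - p) * h) + (1 - p) * exp (- p * h) = exp (- h * p) * (1 + p * (exp h - 1))"
      by (simp add: algebra_simps flip: exp_add)
    also have "\<dots> = exp (- h * p + ln (1 + p * (exp h - 1)))"
      using pos by (simp only: exp_add exp_ln)
    also have "\<dots> \<le> exp (h\<^sup>2 / 8)"
      using Hoeffdings_lemma_aux[of h p] that by simp
    finally show ?thesis .
  qed
  show ?thesis
  proof (cases "h \<ge> 0")
    case True
    then show ?thesis using nonneg assms by blast
  next
    case False
    have "(1 - p) * exp ((1 - (1 - p)) * (- h)) + (1 - (1 - p)) * exp (- (1 - p) * (- h))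
          \<le> exp ((- h)\<^sup>2 / 8)"
      using False assms by (intro nonneg) auto
    then show ?thesis by (simp add: algebra_simps)
  qed
qed

lemma polya_step_mgf_le:
  fixes N c l :: real and r :: nat
  assumes N: "N > 0" and r: "real r \<le> N"
  shows "measure_pmf.expectation
           (map_pmf (\<lambda>x. if x then r + 1 else r) (bernoulli_pmf (real r / N)))
           (\<lambda>r'. exp (l * (real r' / (N + 1) - c)))
         \<le> exp (l * (real r / N - c)) * exp ((l / (N + 1))\<^sup>2 / 8)"
proof -
  define p where "p = real r / N"
  define h where "h = l / (N + 1)"
  have p: "0 \<le> p" "p \<le> 1"
    using N r by (auto simp: p_def)
  have up: "l * ((real r + 1) / (N + 1) - c) = l * (real r / N - c) + (1 - p) * h"
    and stay: "l * (real r / (N + 1) - c) = l * (real r / N - c) + - p * h"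
    using N by (simp_all add: p_def h_def divide_simps) (simp_all add: algebra_simps)
  have "measure_pmf.expectation
           (map_pmf (\<lambda>x. if x then r + 1 else r) (bernoulli_pmf p))
           (\<lambda>r'. exp (l * (real r' / (N + 1) - c)))
        = p * exp (l * ((real r + 1) / (N + 1) - c)) + (1 - p) * exp (l * (real r / (N + 1) - c))"
    using p by (simp add: add.commute)
  also have "\<dots> = exp (l * (real r / N - c)) * (p * exp ((1 - p) * h) + (1 - p) * exp (- p * h))"
    unfolding up stay exp_add by (simp add: algebra_simps)
  also have "\<dots> \<le> exp (l * (real r / N - c)) * exp (h\<^sup>2 / 8)"
    using bernoulli_centered_mgf_le[OF p] by simp
  finally show ?thesis
    by (simp add: p_def h_def)
qed

lemma inverse_square_le_diff_inverse:
  fixes x :: real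
  assumes "x > 0"
  shows "1 / (x + 1)\<^sup>2 \<le> 1 / x - 1 / (x + 1)"
proof -
  have "1 / x - 1 / (x + 1) = 1 / (x * (x + 1))"
    using assms by (simp add: field_simps)
  then show ?thesis
    using assms by (simp add: power2_eq_square frac_le)
qed

lemma polya_proportion_mgf_le:
  assumes "a + b \<ge> 1"
  shows "measure_pmf.expectation (polya_red m a b)
           (\<lambda>r. exp (l * (real r / real (a + b + m) - real a / real (a + b))))
         \<le> exp (l\<^sup>2 / 8 * (1 / real (a + b) - 1 / real (a + b + m)))"
proof (induction m)
  case 0
  then show ?case by simp
next
  case (Suc m)
  define n where "n = real (a + b)"
  define N where "N = real (a + b + m)"
  define c where "c = real a / real (a + b)"
  define C where "C = exp ((l / (N + 1))\<^sup>2 / 8)"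
  define g where "g = (\<lambda>r::nat. exp (l * (real r / N - c)))"
  define step where "step = (\<lambda>r::nat. map_pmf (\<lambda>x. if x then r + 1 else r)
                                       (bernoulli_pmf (real r / N)))"
  have N: "N > 0" and n: "n > 0"
    using assms by (simp_all add: N_def n_def)
  have support: "set_pmf (polya_red m a b) \<subseteq> {..a + m}"
    by (rule polya_red_support)
  have "measure_pmf.expectation (polya_red (Suc m) a b)
          (\<lambda>r. exp (l * (real r / real (a + b + Suc m) - real a / real (a + b))))
        = (\<Sum>r\<in>{..a + m}. pmf (polya_red m a b) r *\<^sub>R
             measure_pmf.expectation (step r) (\<lambda>r'. exp (l * (real r' / (N + 1) - c))))"
    unfolding step_def N_def c_def
    by (simp add: add.commute[of 1] pmf_expectation_bind[OF _ _ support])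
  also have "\<dots> \<le> (\<Sum>r\<in>{..a + m}. pmf (polya_red m a b) r * (g r * C))"
  proof (intro sum_mono)
    fix r assume "r \<in> {..a + m}"
    then have "real r \<le> N"
      by (simp add: N_def)
    then show "pmf (polya_red m a b) r *\<^sub>R
                 measure_pmf.expectation (step r) (\<lambda>r'. exp (l * (real r' / (N + 1) - c)))
               \<le> pmf (polya_red m a b) r * (g r * C)"
      unfolding step_def g_def C_def real_scaleR_def
      by (intro mult_left_mono polya_step_mgf_le[OF N] pmf_nonneg)
  qed
  also have "\<dots> = measure_pmf.expectation (polya_red m a b) g * C"
    using support by (subst integral_measure_pmf_real[of "{..a + m}"])
      (auto simp: sum_distrib_left mult_ac)
  also have "\<dots> \<le> exp (l\<^sup>2 / 8 * (1 / n - 1 / N)) * C"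
    using Suc unfolding g_def n_def N_def c_def C_def by (rule mult_right_mono) simp
  also have "\<dots> = exp (l\<^sup>2 / 8 * (1 / n - (1 / N - 1 / (N + 1)\<^sup>2)))"
    using N n by (simp add: C_def power_divide field_simps flip: exp_add)
  also have "\<dots> \<le> exp (l\<^sup>2 / 8 * (1 / n - 1 / (N + 1)))"
    using inverse_square_le_diff_inverse[OF N] by (simp add: mult_left_mono)
  finally show ?case
    by (simp add: n_def N_def add.commute[of 1])
qed

lemma polya_proportion_one_sided_tail:
  assumes "a + b \<ge> 1" and s: "s > 0" and e: "\<bar>e\<bar> = 1"
  shows "measure_pmf.prob (polya_red m a b)
           {r. s \<le> e * (real r / real (a + b + m) - real a / real (a + b))}
         \<le> exp (- 2 * s\<^sup>2 * real (a + b))"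
proof -
  define n where "n = real (a + b)"
  define N where "N = real (a + b + m)"
  define X where "X = (\<lambda>r::nat. real r / N - real a / n)"
  define l where "l = 4 * s * n"
  have n: "n > 0" and N: "n \<le> N"
    using assms by (simp_all add: n_def N_def)
  have l: "l > 0"
    using s n by (simp add: l_def)
  have "finite (set_pmf (polya_red m a b))"
    using polya_red_support by (rule finite_subset) simp
  then have integrable: "set_integrable (polya_red m a b) UNIV (\<lambda>r. exp (l * (e * X r)))"
    unfolding set_integrable_def by (rule integrable_measure_pmf_finite)
  have "(l * e)\<^sup>2 = l\<^sup>2"
    using e by (simp add: power_mult_distrib abs_if split: if_splits)
  moreover have "l\<^sup>2 / 8 * (1 / n - 1 / N) \<le> l\<^sup>2 / (8 * n)"
    using n N by (simp add: right_diff_distrib)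
  ultimately have "exp ((l * e)\<^sup>2 / 8 * (1 / n - 1 / N)) \<le> exp (l\<^sup>2 / (8 * n))"
    by simp
  with polya_proportion_mgf_le[OF assms(1), of m "l * e"]
  have mgf: "measure_pmf.expectation (polya_red m a b) (\<lambda>r. exp ((l * e) * X r))
               \<le> exp (l\<^sup>2 / (8 * n))"
    unfolding X_def n_def N_def by linarith
  have "measure_pmf.prob (polya_red m a b) {r. s \<le> e * X r}
        \<le> exp (- l * s) * (\<integral>r\<in>UNIV. exp (l * (e * X r)) \<partial>polya_red m a b)"
    using measure_pmf.Chernoff_ineq_ge[OF l integrable, of s] by simp
  also have "\<dots> = exp (- l * s) * measure_pmf.expectation (polya_red m a b) (\<lambda>r. exp ((l * e) * X r))"
    unfolding set_lebesgue_integral_def by (simp add: mult.assoc)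
  also have "\<dots> \<le> exp (- l * s) * exp (l\<^sup>2 / (8 * n))"
    using mgf by simp
  also have "\<dots> = exp (- 2 * s\<^sup>2 * n)"
    unfolding exp_add[symmetric] using n by (simp add: l_def power2_eq_square field_simps)
  finally show ?thesis
    by (simp add: X_def n_def N_def)
qed

lemma polya_proportion_tail:
  assumes "a + b \<ge> 1" and "s \<ge> 0"
  shows "measure_pmf.prob (polya_red m a b)
           {r. s \<le> \<bar>real r / real (a + b + m) - real a / real (a + b)\<bar>}
         \<le> 2 * exp (- 2 * s\<^sup>2 * real (a + b))"
proof (cases "s = 0")
  case True
  have "measure_pmf.prob (polya_red m a b) A \<le> 1" for A
    by simp
  with True show ?thesis
    by simp
next
  case False
  with assms have s: "s > 0" by simp
  define X where "X = (\<lambda>r::nat. real r / real (a + b + m) - real a / real (a + b))"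
  have "measure_pmf.prob (polya_red m a b) {r. s \<le> \<bar>X r\<bar>}
        \<le> measure_pmf.prob (polya_red m a b) ({r. s \<le> 1 * X r} \<union> {r. s \<le> - 1 * X r})"
    by (rule measure_pmf.finite_measure_mono) auto
  also have "\<dots> \<le> measure_pmf.prob (polya_red m a b) {r. s \<le> 1 * X r}
                 + measure_pmf.prob (polya_red m a b) {r. s \<le> - 1 * X r}"
    by (rule measure_Un_le) simp_all
  also have "\<dots> \<le> exp (- 2 * s\<^sup>2 * real (a + b)) + exp (- 2 * s\<^sup>2 * real (a + b))"
    unfolding X_def
    by (intro add_mono polya_proportion_one_sided_tail[OF assms(1) s]) simp_all
  finally show ?thesis
    by (simp add: X_def)
qed

theorem lemma4p8:
  fixes a b m :: nat and t :: real
  assumes "a + b \<ge> 1" and "t > 0"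
  shows "measure_pmf.prob (polya_red m a b)
           {r. \<bar>real r - polya_mu m a b\<bar> \<ge> t * polya_mu m a b}
         \<le> 2 * exp (- (t\<^sup>2 * (real a)\<^sup>2 / (8 * real (a + b))))"
proof -
  define n where "n = real (a + b)"
  define N where "N = real (a + b + m)"
  define c where "c = real a / n"
  have n: "n > 0" and N: "N > 0"
    using assms(1) by (simp_all add: n_def N_def)
  have "polya_mu m a b = N * c"
    using n by (simp add: polya_mu_def N_def c_def n_def field_simps)
  moreover have "\<bar>real r - N * c\<bar> = N * \<bar>real r / N - c\<bar>" for r
  proof -
    have "real r - N * c = N * (real r / N - c)"
      using N by (simp add: field_simps)
    then show ?thesis
      using N by (simp add: abs_mult)
  qed
  ultimately have event: "{r. \<bar>real r - polya_mu m a b\<bar> \<ge> t * polya_mu m a b}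
                          = {r. t * c \<le> \<bar>real r / N - c\<bar>}"
    using N by (simp add: mult.left_commute[of t])
  have "measure_pmf.prob (polya_red m a b) {r. t * c \<le> \<bar>real r / N - c\<bar>}
        \<le> 2 * exp (- 2 * (t * c)\<^sup>2 * n)"
    unfolding N_def c_def n_def using assms
    by (intro polya_proportion_tail) simp_all
  also have "\<dots> \<le> 2 * exp (- (t\<^sup>2 * (real a)\<^sup>2 / (8 * n)))"
  proof -
    have "2 * (t * c)\<^sup>2 * n = 16 * (t\<^sup>2 * (real a)\<^sup>2 / (8 * n))"
      using n by (simp add: c_def power2_eq_square field_simps)
    moreover have "t\<^sup>2 * (real a)\<^sup>2 / (8 * n) \<ge> 0"
      using n by simp
    ultimately show ?thesis
      by simp
  qed
  finally show ?thesis
    by (simp add: event n_def)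
qed

end
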